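(* For $n\geq 6$, every eigenvalue of second-largest modulus of the Perron–Frobenius operator $\tilde P_n$ of $\tilde T_n$ (acting on $BV([0,1])$) has modulus at most $(1+n^{-1})(2+2\kappa_n)^{-1}$, and $(1+n^{-1})(2+2\kappa_n)^{-1}$ is asymptotically equivalent to $\tfrac12(1+n^{-1})$, in the sense that $(1+n^{-1})(2+2\kappa_n)^{-1}=\tfrac12\left(1+\tfrac1n+o(\tfrac1n)\right)$ as $n\to\infty$.
   Context: For $\kappa\in(0,1/2)$, the paired tent map $T_\kappa:[-1,1]\to[-1,1]$ is $T_\kappa(x)=2(1+\kappa)(x+1)-1$ for $x\in[-1,-1/2]$, $T_\kappa(x)=-2(1+\kappa)x-1$ for $x\in[-1/2,0)$, $T_\kappa(0)=0$, $T_\kappa(x)=-2(1+\kappa)x+1$ for $x\in(0,1/2]$, $T_\kappa(x)=2(1+\kappa)(x-1)+1$ for $x\in[1/2,1]$. For $n\geq1$, $\kappa_n$ is the unique solution in $(0,1/2)$ of $(2+2\kappa)^n\kappa=1$, and $\tilde T_n=|T_{\kappa_n}|$ restricted to $[0,1]$, a map $[0,1]\to[0,1]$. Its Perron–Frobenius operator $\tilde P_n$ is defined on $L^1$ of normalized Lebesgue measure $\lambda$ on $[0,1]$ by letting $\tilde P_nf$ be the Radon–Nikodym derivative of $A\mapsto\int_{\tilde T_n^{-1}(A)}f\,d\lambda$; it is considered on the space $BV([0,1])$ of functions of bounded variation. *)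

theory Defs
  imports "HOL-Analysis.Analysis" "HOL-Library.Landau_Symbols"
begin

definition paired_tent :: "real \<Rightarrow> real \<Rightarrow> real" where
  "paired_tent \<kappa> x =
     (if x \<le> -1/2 then 2 * (1 + \<kappa>) * (x + 1) - 1
      else if x < 0 then - 2 * (1 + \<kappa>) * x - 1
      else if x = 0 then 0
      else if x \<le> 1/2 then - 2 * (1 + \<kappa>) * x + 1
      else 2 * (1 + \<kappa>) * (x - 1) + 1)"

definition kappa :: "nat \<Rightarrow> real" where
  "kappa n = (THE \<kappa>. 0 < \<kappa> \<and> \<kappa> < 1/2 \<and> (2 + 2 * \<kappa>) ^ n * \<kappa> = 1)"

definition Ttilde :: "nat \<Rightarrow> real \<Rightarrow> real" where
  "Ttilde n x = \<bar>paired_tent (kappa n) x\<bar>"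

definition bv01 :: "(real \<Rightarrow> complex) \<Rightarrow> bool" where
  "bv01 f \<longleftrightarrow> (\<exists>B. \<forall>(m::nat) (x::nat \<Rightarrow> real).
      0 \<le> x 0 \<and> x m \<le> 1 \<and> (\<forall>i<m. x i \<le> x (Suc i)) \<longrightarrow>
      (\<Sum>i<m. cmod (f (x (Suc i)) - f (x i))) \<le> B)"

text \<open>g is (a version of) the Perron--Frobenius image of f under T on [0,1] with respect to
  Lebesgue measure on [0,1]: g is the Radon--Nikodym derivative of
  A \<mapsto> integral of f over T^{-1}(A), i.e. the integral of g over A equals the integral of f
  over T^{-1}(A) for every Borel A in [0,1].\<close>
definition PF_image :: "(real \<Rightarrow> real) \<Rightarrow> (real \<Rightarrow> complex) \<Rightarrow> (real \<Rightarrow> complex) \<Rightarrow> bool" where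
  "PF_image T f g \<longleftrightarrow> integrable (lebesgue_on {0..1}) g \<and>
     (\<forall>A \<in> sets borel. A \<subseteq> {0..1} \<longrightarrow>
        integral\<^sup>L (lebesgue_on A) g = integral\<^sup>L (lebesgue_on {x \<in> {0..1}. T x \<in> A}) f)"

definition PF_eigenvalues :: "(real \<Rightarrow> real) \<Rightarrow> complex set" where
  "PF_eigenvalues T = {c. \<exists>f. bv01 f \<and> \<not> (AE x in lebesgue_on {0..1}. f x = 0) \<and>
                              PF_image T f (\<lambda>x. c * f x)}"

definition second_largest_eigenvalue :: "complex set \<Rightarrow> complex \<Rightarrow> bool" where
  "second_largest_eigenvalue E c \<longleftrightarrow>
     (let r = Sup (cmod ` E) in
       c \<in> E \<and> cmod c < r \<and> (\<forall>\<mu>\<in>E. cmod \<mu> < r \<longrightarrow> cmod \<mu> \<le> cmod c))"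

end

(* Let P f = c f with f of bounded variation and |c| > (1 + 1/n)/s, where s = 2 + 2 kappa_n.
   The symmetrization h x = f x + f (1 - x) satisfies on (0, 1/2) the equation
   z h x = h (x/s) + h ((1 - x)/s) + [x <= kappa_n] h ((1 + x)/s) with z = s c.  Pulling a family
   of intervals that avoid finitely many breakpoints back along the inverse branches multiplies
   the sum of the increments of h by at least |z| > 1, so bounded variation forces h to be
   constant between breakpoints.  Following these constants along the orbit of kappa_n shows
   that either h vanishes, and then so does f, or z^n (z - 2) = 2; the only root of this
   polynomial of modulus above 1 + 1/n is s itself, i.e. c = 1.  Hence no eigenvalue other than
   1 exceeds (1 + 1/n)/s in modulus.  The asymptotics follow from kappa_n <= 2^-n. *)

theory Submission
  imports Defs "HOL-Real_Asymp.Real_Asymp"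
begin

lemma kappa_equation_strict_mono:
  fixes a b :: real
  assumes "0 \<le> a" "a < b"
  shows "(2 + 2 * a) ^ n * a < (2 + 2 * b) ^ n * b"
proof -
  have "(2 + 2 * a) ^ n * a \<le> (2 + 2 * b) ^ n * a"
    using assms by (intro mult_right_mono power_mono) auto
  also have "\<dots> < (2 + 2 * b) ^ n * b"
    using assms by (intro mult_strict_left_mono) auto
  finally show ?thesis .
qed

lemma kappa_root:
  assumes "n \<ge> 1"
  shows "0 < kappa n" "kappa n < 1/2" "(2 + 2 * kappa n) ^ n * kappa n = 1"
proof -
  let ?\<phi> = "\<lambda>\<kappa>::real. (2 + 2 * \<kappa>) ^ n * \<kappa>"
  have cont: "continuous_on {0..1/2} ?\<phi>"
    by (intro continuous_intros)
  have "(3::real) ^ 1 \<le> 3 ^ n" using assms by (intro power_increasing) auto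
  then have \<phi>_half: "?\<phi> (1/2) > 1" by simp
  obtain x where x: "0 \<le> x" "x \<le> 1/2" "?\<phi> x = 1"
    using IVT'[of ?\<phi> 0 1 "1/2", OF _ _ _ cont] \<phi>_half by auto
  have "x \<noteq> 1/2"
  proof
    assume "x = 1/2"
    with x(3) \<phi>_half show False by simp
  qed
  moreover have "x \<noteq> 0" using x(3) by auto
  ultimately have root: "0 < x \<and> x < 1/2 \<and> ?\<phi> x = 1"
    using x by auto
  have unique: "y = x" if y: "0 < y \<and> y < 1/2 \<and> ?\<phi> y = 1" for y
  proof (cases y x rule: linorder_cases)
    case less
    then have "?\<phi> y < ?\<phi> x" using y by (intro kappa_equation_strict_mono) auto
    then show ?thesis using root y by simp
  next
    case greater
    then have "?\<phi> x < ?\<phi> y" using root by (intro kappa_equation_strict_mono) auto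
    then show ?thesis using root y by simp
  qed
  have "kappa n = x"
    unfolding kappa_def using root unique by (rule the_equality)
  with root show "0 < kappa n" "kappa n < 1/2" "(2 + 2 * kappa n) ^ n * kappa n = 1"
    by auto
qed

lemma kappa_le_half_power:
  assumes "n \<ge> 1"
  shows "kappa n \<le> (1/2) ^ n"
proof -
  have "2 ^ n * kappa n \<le> (2 + 2 * kappa n) ^ n * kappa n"
    using kappa_root[OF assms] by (intro mult_right_mono power_mono) auto
  also have "\<dots> = 1"
    by (rule kappa_root[OF assms])
  finally show ?thesis
    by (simp add: power_one_over field_simps)
qed

lemma eigenvalue_bound_asymptotics:
  "(\<lambda>n. (1 + 1 / real n) / (2 + 2 * kappa n) - (1/2) * (1 + 1 / real n)) \<in> o(\<lambda>n. 1 / real n)"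
proof -
  have "(\<lambda>n. (1 + 1 / real n) / (2 + 2 * kappa n) - (1/2) * (1 + 1 / real n))
          \<in> O(\<lambda>n. (1/2::real) ^ n)"
  proof (rule bigoI[where c = 1], use eventually_ge_at_top[of "1::nat"] in eventually_elim)
    case (elim n)
    note \<kappa> = kappa_root[OF elim] kappa_le_half_power[OF elim]
    have "(1 + 1 / real n) / (2 + 2 * kappa n) - (1/2) * (1 + 1 / real n)
            = - ((1 + 1 / real n) * kappa n / (2 + 2 * kappa n))"
      using \<kappa> by (simp add: field_simps)
    moreover have "(1 + 1 / real n) * kappa n / (2 + 2 * kappa n) \<le> 2 * kappa n / 2"
      using \<kappa> elim by (intro frac_le mult_right_mono) (auto simp: field_simps)
    moreover have "(1 + 1 / real n) * kappa n / (2 + 2 * kappa n) \<ge> 0"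
      using \<kappa> by simp
    ultimately show ?case
      using \<kappa> by simp
  qed
  also have "(\<lambda>n. (1/2::real) ^ n) \<in> o(\<lambda>n. 1 / real n)"
    by real_asymp
  finally show ?thesis .
qed

lemma one_plus_power_ge_quadratic:
  fixes x :: real
  assumes "x \<ge> 0"
  shows "(1 + x) ^ n \<ge> 1 + real n * x + (real n * (real n - 1) / 2) * x\<^sup>2"
proof (induction n)
  case (Suc n)
  have "(1 + x) * (1 + real n * x + (real n * (real n - 1) / 2) * x\<^sup>2)
          - (1 + real (Suc n) * x + (real (Suc n) * (real (Suc n) - 1) / 2) * x\<^sup>2)
        = (real n * (real n - 1) / 2) * x ^ 3"
    by (simp add: field_simps power2_eq_square power3_eq_cube)
  moreover have "(real n * (real n - 1) / 2) * x ^ 3 \<ge> 0"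
    using assms by (cases n) auto
  moreover have "(1 + x) * (1 + real n * x + (real n * (real n - 1) / 2) * x\<^sup>2) \<le> (1 + x) ^ Suc n"
    using Suc.IH assms by (simp add: mult_left_mono)
  ultimately show ?case
    by linarith
qed simp

lemma one_plus_inverse_power_ge:
  assumes "n \<ge> 6"
  shows "(1 + 1 / real n) ^ n * (1 - 1 / real n) \<ge> 2"
proof -
  have n: "real n \<ge> 6" using assms by simp
  have "real n * real n \<ge> 6 * real n"
    using n by (intro mult_right_mono) auto
  then have "2 * (2 * (real n)\<^sup>2) \<le> (5 * real n - 1) * (real n - 1)"
    by (simp add: algebra_simps power2_eq_square)
  then have "2 \<le> (5 * real n - 1) * (real n - 1) / (2 * (real n)\<^sup>2)"
    using n by (simp add: pos_le_divide_eq)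
  also have "\<dots> = (1 + real n * (1 / real n) + (real n * (real n - 1) / 2) * (1 / real n)\<^sup>2)
                    * (1 - 1 / real n)"
    using n by (simp add: field_simps power2_eq_square)
  also have "\<dots> \<le> (1 + 1 / real n) ^ n * (1 - 1 / real n)"
    using n by (intro mult_right_mono one_plus_power_ge_quadratic) auto
  finally show ?thesis .
qed

lemma mixed_geometric_sum_le_one:
  assumes "n \<ge> 6"
  shows "(\<Sum>i<n. (1/2::real) ^ (n - Suc i) * (1 / (1 + 1 / real n)) ^ Suc i) \<le> 1"
proof -
  define r where "r = 1 + 1 / real n"
  have r: "1 < r" "r < 2" using assms by (auto simp: r_def)
  have "(\<Sum>i<n. (1/2::real) ^ (n - Suc i) * (1/r) ^ Suc i) = (\<Sum>i<n. (1/2) ^ i * (1/r) ^ (n - i))"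
    by (rule sum.reindex_bij_witness[where i="\<lambda>i. n - Suc i" and j="\<lambda>i. n - Suc i"])
      (auto simp: Suc_diff_Suc)
  also have "\<dots> = (\<Sum>i<n. (1/r) ^ n * (r/2) ^ i)"
  proof (rule sum.cong)
    fix i assume "i \<in> {..<n}"
    then have "(1/r) ^ n = (1/r) ^ (n - i) * (1/r) ^ i"
      by (simp flip: power_add)
    then show "(1/2) ^ i * (1/r) ^ (n - i) = (1/r) ^ n * (r/2) ^ i"
      using r by (simp add: power_divide)
  qed simp
  also have "\<dots> = (1/r) ^ n * ((1 - (r/2) ^ n) / (1 - r/2))"
    using r sum_gp_strict[of "r/2" n] by (simp flip: sum_distrib_left)
  also have "\<dots> \<le> (1/r) ^ n * (1 / (1 - r/2))"
    using r by (intro mult_left_mono divide_right_mono) auto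
  also have "\<dots> = 2 / (r ^ n * (2 - r))"
    using r by (simp add: power_divide divide_simps)
  also have "\<dots> \<le> 1"
    using one_plus_inverse_power_ge[OF assms] by (simp add: r_def)
  finally show ?thesis
    by (simp add: r_def)
qed

lemma mixed_power_sum_less:
  fixes s \<rho> :: real
  assumes n: "n \<ge> 6" and s: "s > 2" and \<rho>: "\<rho> > 1 + 1 / real n"
  shows "2 * (\<Sum>i<n. \<rho> ^ (n - Suc i) * s ^ i) < \<rho> ^ n * s ^ n"
proof -
  define r where "r = 1 + 1 / real n"
  have r: "r > 0" "\<rho> > r" using \<rho> by (auto simp: r_def add_pos_nonneg)
  have "(\<Sum>i<n. 2 * (\<rho> ^ (n - Suc i) * s ^ i) / (\<rho> ^ n * s ^ n))
          < (\<Sum>i<n. (1/2) ^ (n - Suc i) * (1/r) ^ Suc i)"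
  proof (rule sum_strict_mono)
    fix i assume "i \<in> {..<n}"
    then have "n = (n - Suc i) + Suc i" by simp
    then have split: "x ^ n = x ^ (n - Suc i) * x ^ Suc i" for x :: real
      by (metis power_add)
    have "2 * (\<rho> ^ (n - Suc i) * s ^ i) / (\<rho> ^ n * s ^ n)
            = (2 / s) * ((1/s) ^ (n - Suc i) * (1/\<rho>) ^ Suc i)"
      using s r unfolding split[of \<rho>] split[of s] by (simp add: power_divide field_simps)
    also have "\<dots> < 1 * ((1/2) ^ (n - Suc i) * (1/r) ^ Suc i)"
    proof (rule mult_less_le_imp_less)
      show "(1/s) ^ (n - Suc i) * (1/\<rho>) ^ Suc i \<le> (1/2) ^ (n - Suc i) * (1/r) ^ Suc i"
        using s r by (intro mult_mono power_mono) (auto simp: divide_simps)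
    qed (use s r in auto)
    finally show "2 * (\<rho> ^ (n - Suc i) * s ^ i) / (\<rho> ^ n * s ^ n) < (1/2) ^ (n - Suc i) * (1/r) ^ Suc i"
      by simp
  qed (use n in \<open>auto simp: lessThan_empty_iff\<close>)
  also have "\<dots> \<le> 1"
    unfolding r_def by (rule mixed_geometric_sum_le_one[OF n])
  finally show ?thesis
    using s r by (simp add: sum_distrib_left flip: sum_divide_distrib)
qed

lemma distinct_roots_norm_identity:
  fixes z w :: complex
  assumes z: "z ^ n * (z - 2) = 2" and w: "w ^ n * (w - 2) = 2" and "z \<noteq> w"
  shows "2 * norm (\<Sum>i<n. z ^ (n - Suc i) * w ^ i) = norm z ^ n * norm w ^ n"
proof -
  define Q where "Q = (\<Sum>i<n. z ^ (n - Suc i) * w ^ i)"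
  have nonzero: "z \<noteq> 0" "w \<noteq> 0"
    using z w by (auto simp: power_0_left split: if_splits)
  then have "z - 2 = 2 / z ^ n" "w - 2 = 2 / w ^ n"
    using z w by (simp_all add: field_simps)
  then have "z - w = 2 / z ^ n - 2 / w ^ n"
    by (simp add: algebra_simps flip: \<open>z - 2 = 2 / z ^ n\<close> \<open>w - 2 = 2 / w ^ n\<close>)
  also have "\<dots> = 2 * (w ^ n - z ^ n) / (z ^ n * w ^ n)"
    using nonzero by (simp add: field_simps)
  also have "w ^ n - z ^ n = (w - z) * Q"
    unfolding Q_def by (rule power_diff_sumr2)
  finally have "(z - w) * (z ^ n * w ^ n + 2 * Q) = 0"
    using nonzero by (simp add: field_simps)
  then have "z ^ n * w ^ n = - (2 * Q)"
    using \<open>z \<noteq> w\<close> by (simp add: eq_neg_iff_add_eq_0)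
  then have "norm (z ^ n * w ^ n) = 2 * norm Q"
    by simp
  then show ?thesis
    by (simp add: Q_def norm_mult norm_power)
qed

text \<open>Applied to \<open>s = 2 + 2 \<kappa>\<^sub>n\<close>, a root since \<open>s\<^sup>n (s - 2) = 2 s\<^sup>n \<kappa>\<^sub>n = 2\<close>.\<close>

lemma characteristic_root_unique:
  fixes z :: complex and s :: real
  assumes n: "n \<ge> 6" and s: "s > 2" "s ^ n * (s - 2) = 2"
    and z: "z ^ n * (z - 2) = 2" "norm z > 1 + 1 / real n"
  shows "z = of_real s"
proof (rule ccontr)
  assume "z \<noteq> of_real s"
  moreover have "of_real s ^ n * (of_real s - 2) = (2 :: complex)"
    by (metis s(2) of_real_numeral of_real_mult of_real_power of_real_diff)
  ultimately have "norm z ^ n * s ^ n = 2 * norm (\<Sum>i<n. z ^ (n - Suc i) * of_real s ^ i)"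
    using distinct_roots_norm_identity[OF z(1)] s(1) by (simp add: norm_power)
  also have "\<dots> \<le> 2 * (\<Sum>i<n. norm z ^ (n - Suc i) * s ^ i)"
    using norm_sum[of "\<lambda>i. z ^ (n - Suc i) * of_real s ^ i" "{..<n}"] s(1)
    by (simp add: norm_mult norm_power)
  also have "\<dots> < norm z ^ n * s ^ n"
    by (rule mixed_power_sum_less[OF n s(1) z(2)])
  finally show False
    by simp
qed

definition endpoints :: "(real \<times> real) list \<Rightarrow> real list" where
  "endpoints L = concat (map (\<lambda>(a, b). [a, b]) L)"

definition increment_sum :: "(real \<Rightarrow> 'a::real_normed_vector) \<Rightarrow> (real \<times> real) list \<Rightarrow> real" where
  "increment_sum h L = sum_list (map (\<lambda>(a, b). norm (h b - h a)) L)"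

lemma endpoints_simps [simp]:
  "endpoints [] = []"
  "endpoints ((a, b) # L) = a # b # endpoints L"
  "endpoints (L1 @ L2) = endpoints L1 @ endpoints L2"
  by (auto simp: endpoints_def)

lemma increment_sum_simps [simp]:
  "increment_sum h [] = 0"
  "increment_sum h ((a, b) # L) = norm (h b - h a) + increment_sum h L"
  "increment_sum h (L1 @ L2) = increment_sum h L1 + increment_sum h L2"
  "increment_sum h (rev L) = increment_sum h L"
  by (auto simp: increment_sum_def rev_map[symmetric])

lemma increment_sum_nonneg: "increment_sum h L \<ge> 0"
  unfolding increment_sum_def by (induction L) auto

lemma increment_sum_map:
  "increment_sum h (map f L) = sum_list (map (\<lambda>p. case f p of (a, b) \<Rightarrow> norm (h b - h a)) L)"
  by (induction L) (auto simp: increment_sum_def split: prod.splits)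

lemma endpoints_map: "endpoints (map (\<lambda>(a, b). (f a, f b)) L) = map f (endpoints L)"
  by (induction L) auto

lemma endpoints_rev_map: "endpoints (rev (map (\<lambda>(a, b). (f b, f a)) L)) = rev (map f (endpoints L))"
  by (induction L) auto

lemma set_endpoints: "x \<in> set (endpoints L) \<longleftrightarrow> (\<exists>(a, b) \<in> set L. x = a \<or> x = b)"
  by (induction L) auto

lemma set_endpoints_filter: "set (endpoints (filter P L)) \<subseteq> set (endpoints L)"
  by (induction L) auto

lemma sorted_endpoints_filter: "sorted (endpoints L) \<Longrightarrow> sorted (endpoints (filter P L))"
proof (induction L)
  case (Cons p L)
  obtain a b where p: "p = (a, b)" by fastforce
  with Cons.prems have "sorted (a # b # endpoints L)" by simp
  with Cons.IH set_endpoints_filter[of P L] show ?case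
    using p by auto
qed simp

fun list_variation :: "(real \<Rightarrow> 'a::real_normed_vector) \<Rightarrow> real list \<Rightarrow> real" where
  "list_variation f (x # y # xs) = norm (f y - f x) + list_variation f (y # xs)"
| "list_variation f _ = 0"

lemma list_variation_conv_sum:
  "list_variation f xs = (\<Sum>i < length xs - 1. norm (f (xs ! Suc i) - f (xs ! i)))"
proof (induction f xs rule: list_variation.induct)
  case (1 f x y xs)
  then show ?case
    by (simp add: sum.lessThan_Suc_shift del: sum.lessThan_Suc)
qed auto

lemma increment_sum_le_list_variation: "increment_sum f L \<le> list_variation f (endpoints L)"
proof (induction L)
  case (Cons p L)
  obtain a b where p: "p = (a, b)" by fastforce
  have "list_variation f (endpoints L) \<le> list_variation f (b # endpoints L)"
    by (cases "endpoints L") auto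
  with Cons p show ?case by simp
qed simp

lemma bv01_list_variation_le:
  assumes "bv01 f"
  obtains B where "\<And>xs. sorted xs \<Longrightarrow> set xs \<subseteq> {0..1} \<Longrightarrow> list_variation f xs \<le> B"
proof -
  obtain B where B: "\<And>m x. 0 \<le> x 0 \<Longrightarrow> x m \<le> 1 \<Longrightarrow> (\<forall>i<m. x i \<le> x (Suc i)) \<Longrightarrow>
      (\<Sum>i<m. cmod (f (x (Suc i)) - f (x i))) \<le> B"
    using assms by (auto simp: bv01_def)
  have "list_variation f xs \<le> B" if xs: "sorted xs" "set xs \<subseteq> {0..1}" for xs
  proof (cases "xs = []")
    case True
    then show ?thesis using B[of "\<lambda>_. 0" 0] by simp
  next
    case False
    define m where "m = length xs - 1"
    then have m: "m < length xs" using False by simp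
    have "xs ! 0 \<in> set xs" "xs ! m \<in> set xs"
      using m by (auto intro: nth_mem)
    moreover have "\<forall>i<m. xs ! i \<le> xs ! Suc i"
      using xs(1) by (auto simp: m_def intro: sorted_nth_mono)
    ultimately have "(\<Sum>i<m. cmod (f (xs ! Suc i) - f (xs ! i))) \<le> B"
      using xs(2) by (intro B) auto
    then show ?thesis by (simp add: list_variation_conv_sum m_def)
  qed
  then show ?thesis by (rule that)
qed

lemma bv01_symmetrization_increment_sum_le:
  assumes "bv01 f"
  obtains V where "\<And>L. sorted (endpoints L) \<Longrightarrow> set (endpoints L) \<subseteq> {0<..<1/2} \<Longrightarrow>
    increment_sum (\<lambda>x. f x + f (1 - x)) L \<le> V"
proof -
  obtain B where B: "\<And>xs. sorted xs \<Longrightarrow> set xs \<subseteq> {0..1} \<Longrightarrow> list_variation f xs \<le> B"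
    using bv01_list_variation_le[OF assms] by blast
  have "increment_sum (\<lambda>x. f x + f (1 - x)) L \<le> 2 * B"
    if L: "sorted (endpoints L)" "set (endpoints L) \<subseteq> {0<..<1/2}" for L
  proof -
    define R where "R = rev (map (\<lambda>(a, b). (1 - b, 1 - a)) L)"
    have endpoints_R: "endpoints R = rev (map (\<lambda>x. 1 - x) (endpoints L))"
      unfolding R_def by (rule endpoints_rev_map)
    have "increment_sum (\<lambda>x. f x + f (1 - x)) L \<le> increment_sum f L + increment_sum f R"
      unfolding R_def increment_sum_simps increment_sum_map
      unfolding increment_sum_def sum_list_addf[symmetric]
    proof (rule sum_list_mono, clarsimp)
      fix a b :: real
      have "f b + f (1 - b) - (f a + f (1 - a)) = (f b - f a) + (f (1 - b) - f (1 - a))"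
        by simp
      then show "cmod (f b + f (1 - b) - (f a + f (1 - a)))
          \<le> cmod (f b - f a) + cmod (f (1 - a) - f (1 - b))"
        by (metis norm_triangle_ineq norm_minus_commute)
    qed
    also have "increment_sum f L \<le> B"
      using increment_sum_le_list_variation[of f L] B[of "endpoints L"] L by force
    also have "increment_sum f R \<le> B"
      using increment_sum_le_list_variation[of f R] B[of "endpoints R"] L
      unfolding endpoints_R
      by (force simp: sorted_wrt_rev sorted_wrt_map intro: sorted_wrt_mono_rel)
    finally show ?thesis by simp
  qed
  then show ?thesis by (rule that)
qed

lemma expanding_bounded_nonneg_eq_0:
  fixes F :: "'a \<Rightarrow> real"
  assumes bdd: "bdd_above (F ` X)" and q: "q > 1"
    and nonneg: "\<And>x. x \<in> X \<Longrightarrow> F x \<ge> 0"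
    and step: "\<And>x. x \<in> X \<Longrightarrow> step x \<in> X \<and> q * F x \<le> F (step x)"
    and x: "x \<in> X"
  shows "F x = 0"
proof -
  define S where "S = Sup (F ` X)"
  have le_S: "F y \<le> S" if "y \<in> X" for y
    unfolding S_def using bdd that by (intro cSup_upper) auto
  have "q * F y \<le> S" if "y \<in> X" for y
    using step[OF that] le_S[of "step y"] by auto
  then have "F y \<le> S / q" if "y \<in> X" for y
    using that q by (simp add: pos_le_divide_eq mult.commute)
  then have "S \<le> S / q"
    unfolding S_def using x by (intro cSup_least) auto
  then have "S * (q - 1) \<le> 0"
    using q by (simp add: pos_le_divide_eq algebra_simps)
  then have "S \<le> 0"
    using q by (simp add: mult_le_0_iff)
  then show ?thesis
    using le_S[OF x] nonneg[OF x] by simp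
qed

lemma null_sets_invariant_hull:
  fixes N :: "real set" and F :: "(real \<Rightarrow> real) set"
  assumes N: "N \<in> null_sets lebesgue" and F: "finite F" "\<And>f. f \<in> F \<Longrightarrow> f differentiable_on UNIV"
  obtains Z where "N \<subseteq> Z" "Z \<in> null_sets lebesgue" "\<And>f x. f \<in> F \<Longrightarrow> x \<in> Z \<Longrightarrow> f x \<in> Z"
proof -
  define Zs where "Zs = rec_nat N (\<lambda>_ Y. Y \<union> (\<Union>f \<in> F. f ` Y))"
  have Zs_Suc: "Zs (Suc j) = Zs j \<union> (\<Union>f \<in> F. f ` Zs j)" for j
    by (simp add: Zs_def)
  have null: "Zs j \<in> null_sets lebesgue" for j
  proof (induction j)
    case 0
    then show ?case using N by (simp add: Zs_def)
  next
    case (Suc j)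
    have "f ` Zs j \<in> null_sets lebesgue" if "f \<in> F" for f
      using Suc negligible_differentiable_image_negligible[of "Zs j" f] F(2)[OF that]
      by (auto simp: negligible_iff_null_sets differentiable_on_subset)
    then show ?case
      unfolding Zs_Suc using Suc F(1) by (intro null_sets.Un null_sets_UN' countable_finite) auto
  qed
  show ?thesis
  proof
    have "Zs 0 = N"
      by (simp add: Zs_def)
    then show "N \<subseteq> (\<Union>j. Zs j)"
      by blast
    show "(\<Union>j. Zs j) \<in> null_sets lebesgue"
      using null by (rule null_sets_UN)
    show "f x \<in> (\<Union>j. Zs j)" if f: "f \<in> F" and x: "x \<in> (\<Union>j. Zs j)" for f x
    proof -
      obtain j where "x \<in> Zs j" using x by blast
      then have "f x \<in> Zs (Suc j)" using f by (auto simp: Zs_Suc)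
      then show ?thesis by blast
    qed
  qed
qed

lemma AE_eq_if_borel_set_integrals_eq:
  fixes g g' :: "real \<Rightarrow> 'a::{second_countable_topology, banach}"
  assumes g: "integrable (lebesgue_on {a..b}) g" "integrable (lebesgue_on {a..b}) g'"
    and eq: "\<And>A. A \<in> sets borel \<Longrightarrow> A \<subseteq> {a..b} \<Longrightarrow>
      integral\<^sup>L (lebesgue_on A) g = integral\<^sup>L (lebesgue_on A) g'"
  shows "AE x in lebesgue_on {a..b}. g x = g' x"
proof -
  let ?M = "lebesgue_on {a..b}"
  have "sigma_finite_measure ?M"
    using finite_measure_lebesgue_on[of "{a..b}"] finite_measure.axioms(1) by auto
  then show ?thesis
  proof (rule sigma_finite_measure.density_unique_banach[OF _ g])
    fix A assume "A \<in> sets ?M"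
    then have A: "A \<subseteq> {a..b}" "A \<in> sets lebesgue"
      by (auto simp: sets_restrict_space_iff)
    then obtain B N N' where BN: "A = B \<union> N" "N \<subseteq> N'" "N' \<in> null_sets lborel" "B \<in> sets lborel"
      by (elim sets_completionE)
    \<comment> \<open>a Lebesgue set differs from a Borel set by a null set\<close>
    define B' where "B' = B \<inter> {a..b}"
    have B': "B' \<in> sets borel" "B' \<subseteq> {a..b}" "B' \<in> sets ?M"
      using BN(4) by (auto simp: B'_def sets_restrict_space_iff)
    have "N' \<inter> {a..b} \<in> null_sets ?M"
      using null_set_Int2[OF null_sets_completionI[OF BN(3)], of "{a..b}"]
      by (auto simp: null_sets_restrict_space)
    then have ae: "AE x in ?M. x \<in> A \<longleftrightarrow> x \<in> B'"
      by (rule AE_mp[OF AE_not_in]) (use BN A in \<open>auto simp: B'_def space_restrict_space\<close>)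
    have "set_lebesgue_integral ?M A f = integral\<^sup>L (lebesgue_on B') f"
      if f: "integrable ?M f" for f :: "real \<Rightarrow> 'a"
    proof -
      have "(\<lambda>x. indicator X x *\<^sub>R f x) \<in> borel_measurable ?M" if "X \<in> sets ?M" for X
        using integrable_mult_indicator[OF that f] by (rule borel_measurable_integrable)
      then have "set_lebesgue_integral ?M A f = set_lebesgue_integral ?M B' f"
        unfolding set_lebesgue_integral_def using ae \<open>A \<in> sets ?M\<close> B'(3)
        by (intro integral_cong_AE) (auto simp: indicator_def)
      also have "\<dots> = integral\<^sup>L lebesgue (\<lambda>x. indicator {a..b} x *\<^sub>R (indicator B' x *\<^sub>R f x))"
        unfolding set_lebesgue_integral_def by (simp add: integral_restrict_space)
      also have "\<dots> = integral\<^sup>L lebesgue (\<lambda>x. indicator B' x *\<^sub>R f x)"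
        using B'(2) by (intro arg_cong[where f = "integral\<^sup>L lebesgue"]) (auto simp: indicator_def fun_eq_iff)
      also have "\<dots> = integral\<^sup>L (lebesgue_on B') f"
        using B'(1) by (simp add: integral_restrict_space)
      finally show ?thesis .
    qed
    then show "set_lebesgue_integral ?M A g = set_lebesgue_integral ?M A g'"
      using eq[OF B'(1,2)] g by simp
  qed
qed

lemma integral_indicator_affine:
  fixes f :: "real \<Rightarrow> 'a::euclidean_space"
  assumes f: "integrable lebesgue (\<lambda>x. indicator S x *\<^sub>R f x)"
    and \<psi>: "\<And>y. \<psi> y = t + c * y" and c: "c \<noteq> 0" and R: "\<And>y. \<psi> y \<in> S \<longleftrightarrow> y \<in> R"
  shows "integrable lebesgue (\<lambda>y. indicator R y *\<^sub>R f (\<psi> y))"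
    and "integral\<^sup>L lebesgue (\<lambda>x. indicator S x *\<^sub>R f x)
           = \<bar>c\<bar> *\<^sub>R integral\<^sup>L lebesgue (\<lambda>y. indicator R y *\<^sub>R f (\<psi> y))"
  using lebesgue_integrable_real_affine[OF f c, of t]
    lebesgue_integral_real_affine[OF c, of "\<lambda>x. indicator S x *\<^sub>R f x" t]
  by (simp_all add: indicator_def R flip: \<psi>)

lemma integrable_indicator_subset:
  fixes f :: "'a::euclidean_space \<Rightarrow> 'b::{banach, second_countable_topology}"
  assumes f: "integrable (lebesgue_on T) f" and T: "T \<in> sets lebesgue"
    and S: "S \<in> sets lebesgue" "S \<subseteq> T"
  shows "integrable lebesgue (\<lambda>x. indicator S x *\<^sub>R f x)"
proof -
  have "integrable lebesgue (\<lambda>x. indicator S x *\<^sub>R (indicator T x *\<^sub>R f x))"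
  proof (rule integrable_mult_indicator)
    show "integrable lebesgue (\<lambda>x. indicator T x *\<^sub>R f x)"
      using f T by (simp add: integrable_restrict_space)
  qed (rule S(1))
  moreover have "(\<lambda>x. indicator S x *\<^sub>R (indicator T x *\<^sub>R f x)) = (\<lambda>x. indicator S x *\<^sub>R f x)"
    using S(2) by (auto simp: indicator_def fun_eq_iff)
  ultimately show ?thesis
    by simp
qed

locale tent_slope =
  fixes k s :: real
  assumes k_pos: "0 < k" and k_less_half: "k < 1/2" and s_def: "s = 2 + 2 * k"
begin

lemma s_gt_2: "s > 2"
  using k_pos s_def by simp

lemma s_pos: "s > 0"
  using s_gt_2 by simp

lemma half_eq: "1/2 = (1 + k) / s"
  using s_def k_pos by (simp add: field_simps)

lemma divide_s_le_iff [simp]: "a / s \<le> b / s \<longleftrightarrow> a \<le> b"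
  and divide_s_less_iff [simp]: "a / s < b / s \<longleftrightarrow> a < b"
  using s_pos by (simp_all add: divide_le_cancel divide_less_cancel)

lemma abs_paired_tent:
  assumes "0 < x" "x \<le> 1"
  shows "\<bar>paired_tent k x\<bar> =
    (if x \<le> 1 / s then 1 - s * x else if x \<le> 1/2 then s * x - 1
     else if x < 1 - 1 / s then s * (1 - x) - 1 else 1 - s * (1 - x))"
proof -
  have "1 / s < 1/2" using s_gt_2 by simp
  then consider "x \<le> 1 / s" | "1 / s < x" "x \<le> 1/2" | "1/2 < x" "x < 1 - 1 / s" | "1 - 1 / s \<le> x"
    by linarith
  then show ?thesis
  proof cases
    case 1
    then have "s * x \<le> 1" "x \<le> 1/2"
      using s_gt_2 \<open>1 / s < 1/2\<close> by (simp add: field_simps, linarith)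
    then have "\<bar>paired_tent k x\<bar> = 1 - s * x"
      using assms by (simp add: paired_tent_def s_def algebra_simps)
    with 1 show ?thesis by simp
  next
    case 2
    then have "s * x > 1"
      using s_gt_2 by (simp add: field_simps)
    then have "\<bar>paired_tent k x\<bar> = s * x - 1"
      using 2 assms by (simp add: paired_tent_def s_def algebra_simps)
    with 2 show ?thesis by simp
  next
    case 3
    then have "s * (1 - x) > 1"
      using s_gt_2 by (simp add: field_simps)
    then have "\<bar>paired_tent k x\<bar> = s * (1 - x) - 1"
      using 3 assms by (simp add: paired_tent_def s_def algebra_simps)
    moreover have "\<not> x \<le> 1 / s"
      using 3 \<open>1 / s < 1/2\<close> by linarith
    ultimately show ?thesis using 3 by simp
  next
    case 4
    then have "s * (1 - x) \<le> 1" "1/2 < x"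
      using s_gt_2 \<open>1 / s < 1/2\<close> by (simp add: field_simps, linarith)
    then have "\<bar>paired_tent k x\<bar> = 1 - s * (1 - x)"
      using assms by (simp add: paired_tent_def s_def algebra_simps)
    moreover have "\<not> x \<le> 1 / s" "\<not> x < 1 - 1 / s"
      using 4 \<open>1/2 < x\<close> \<open>1 / s < 1/2\<close> by linarith+
    ultimately show ?thesis using \<open>1/2 < x\<close> by simp
  qed
qed

text \<open>Pointwise form of the Perron--Frobenius operator of \<open>|T\<^sub>k|\<close> on \<open>[0, 1]\<close>.\<close>

definition transfer :: "(real \<Rightarrow> complex) \<Rightarrow> real \<Rightarrow> complex" where
  "transfer f y = (1 / s) *\<^sub>R (f ((1 - y) / s) + f (1 - (1 - y) / s)
     + (if y \<le> k then f ((1 + y) / s) + f (1 - (1 + y) / s) else 0))"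

lemma scaled_transfer:
  "of_real s * transfer f y = (f ((1 - y) / s) + f (1 - (1 - y) / s))
     + (if y \<le> k then f ((1 + y) / s) + f (1 - (1 + y) / s) else 0)"
  using s_pos by (simp add: transfer_def scaleR_conv_of_real)

lemma indicator_tent_preimage:
  assumes "x \<noteq> 0"
  shows "indicator {x \<in> {0..1}. \<bar>paired_tent k x\<bar> \<in> A} x
    = indicator {x. 0 < x \<and> x \<le> 1 / s \<and> 1 - s * x \<in> A} x
    + indicator {x. 1 / s < x \<and> x \<le> 1/2 \<and> s * x - 1 \<in> A} x
    + indicator {x. 1/2 < x \<and> x < 1 - 1 / s \<and> s * (1 - x) - 1 \<in> A} x
    + (indicator {x. 1 - 1 / s \<le> x \<and> x \<le> 1 \<and> 1 - s * (1 - x) \<in> A} x :: real)"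
proof -
  have s: "0 < 1 / s" "1 / s < 1/2" "1/2 < 1 - 1 / s"
    using s_gt_2 by (auto simp: field_simps)
  with assms show ?thesis
    by (auto simp: indicator_def abs_paired_tent split: if_splits) (use s in linarith)+
qed

lemma inverse_branches_mem_iff:
  assumes "A \<subseteq> {0..1}"
  shows "(1 - y) / s \<in> {x. 0 < x \<and> x \<le> 1 / s \<and> 1 - s * x \<in> A} \<longleftrightarrow> y \<in> A - {1}"
    and "(1 + y) / s \<in> {x. 1 / s < x \<and> x \<le> 1/2 \<and> s * x - 1 \<in> A} \<longleftrightarrow> y \<in> A \<inter> {0<..k}"
    and "1 - (1 + y) / s \<in> {x. 1/2 < x \<and> x < 1 - 1 / s \<and> s * (1 - x) - 1 \<in> A}
           \<longleftrightarrow> y \<in> A \<inter> {0<..<k}"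
    and "1 - (1 - y) / s \<in> {x. 1 - 1 / s \<le> x \<and> x \<le> 1 \<and> 1 - s * (1 - x) \<in> A} \<longleftrightarrow> y \<in> A"
proof -
  have "1/2 < 1 - (1 + y) / s \<longleftrightarrow> (1 + y) / s < (1 + k) / s"
    using half_eq by linarith
  then show "1 - (1 + y) / s \<in> {x. 1/2 < x \<and> x < 1 - 1 / s \<and> s * (1 - x) - 1 \<in> A}
           \<longleftrightarrow> y \<in> A \<inter> {0<..<k}"
    using assms s_pos by (auto simp: subset_iff)
qed (use assms s_pos in \<open>auto simp: half_eq zero_less_divide_iff subset_iff\<close>)

definition branch_sum :: "real set \<Rightarrow> (real \<Rightarrow> complex) \<Rightarrow> real \<Rightarrow> complex" where
  "branch_sum A f y = indicator (A - {1}) y *\<^sub>R f ((1 - y) / s)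
    + indicator (A \<inter> {0<..k}) y *\<^sub>R f ((1 + y) / s)
    + indicator (A \<inter> {0<..<k}) y *\<^sub>R f (1 - (1 + y) / s)
    + indicator A y *\<^sub>R f (1 - (1 - y) / s)"

lemma branch_sum_ae_eq_transfer:
  assumes "A \<subseteq> {0..1}"
  shows "AE y in lebesgue. (1 / s) *\<^sub>R branch_sum A f y = indicator A y *\<^sub>R transfer f y"
proof -
  have "AE y in lebesgue. y \<notin> {0, 1, k}"
    by (rule AE_not_in) simp
  then show ?thesis
    by eventually_elim (use assms in \<open>auto simp: branch_sum_def transfer_def indicator_def subset_iff\<close>)
qed

lemma integral_tent_preimage_eq_branch_sum:
  fixes f :: "real \<Rightarrow> complex"
  assumes f: "integrable (lebesgue_on {0..1}) f" and A: "A \<in> sets borel" "A \<subseteq> {0..1}"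
  shows "integrable lebesgue (branch_sum A f)"
    and "integral\<^sup>L (lebesgue_on {x \<in> {0..1}. \<bar>paired_tent k x\<bar> \<in> A}) f
           = (1 / s) *\<^sub>R integral\<^sup>L lebesgue (branch_sum A f)"
proof -
  let ?S1 = "{x. 0 < x \<and> x \<le> 1 / s \<and> 1 - s * x \<in> A}"
  let ?S2 = "{x. 1 / s < x \<and> x \<le> 1/2 \<and> s * x - 1 \<in> A}"
  let ?S3 = "{x. 1/2 < x \<and> x < 1 - 1 / s \<and> s * (1 - x) - 1 \<in> A}"
  let ?S4 = "{x. 1 - 1 / s \<le> x \<and> x \<le> 1 \<and> 1 - s * (1 - x) \<in> A}"
  let ?P = "{x \<in> {0..1}. \<bar>paired_tent k x\<bar> \<in> A}"
  have [measurable]: "A \<in> sets borel" "paired_tent k \<in> borel_measurable borel"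
    using A(1) unfolding paired_tent_def[abs_def] by measurable
  have inv: "0 < 1 / s" "1 / s < 1/2"
    using s_gt_2 by (auto simp: field_simps)
  have S: "?S1 \<in> sets borel" "?S2 \<in> sets borel" "?S3 \<in> sets borel" "?S4 \<in> sets borel" "?P \<in> sets borel"
    "?S1 \<subseteq> {0..1}" "?S2 \<subseteq> {0..1}" "?S3 \<subseteq> {0..1}" "?S4 \<subseteq> {0..1}" "?P \<subseteq> {0..1}"
    by auto (use inv in linarith)+
  let ?F = "\<lambda>S x. indicator S x *\<^sub>R f x"
  have int: "integrable lebesgue (?F S)" if "S \<in> sets borel" "S \<subseteq> {0..1}" for S
    using integrable_indicator_subset[OF f] that by auto
  have affine: "(1 - y) / s = 1 / s + (- 1 / s) * y" "(1 + y) / s = 1 / s + (1 / s) * y"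
    "1 - (1 + y) / s = (1 - 1 / s) + (- 1 / s) * y" "1 - (1 - y) / s = (1 - 1 / s) + (1 / s) * y" for y
    using s_pos by (simp_all add: field_simps)
  note branch = inverse_branches_mem_iff[OF A(2)]
  note branches = integral_indicator_affine[OF int[OF S(1,6)] affine(1) _ branch(1)]
    integral_indicator_affine[OF int[OF S(2,7)] affine(2) _ branch(2)]
    integral_indicator_affine[OF int[OF S(3,8)] affine(3) _ branch(3)]
    integral_indicator_affine[OF int[OF S(4,9)] affine(4) _ branch(4)]
  show "integrable lebesgue (branch_sum A f)"
    unfolding branch_sum_def using branches s_pos by auto
  have "AE x in lebesgue. x \<notin> {0}"
    by (rule AE_not_in) simp
  then have "AE x in lebesgue. ?F ?P x = ?F ?S1 x + ?F ?S2 x + ?F ?S3 x + ?F ?S4 x"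
  proof eventually_elim
    case (elim x)
    then have "x \<noteq> 0" by simp
    then show ?case
      unfolding indicator_tent_preimage[OF \<open>x \<noteq> 0\<close>, of A]
      by (simp only: scaleR_add_left)
  qed
  then have "integral\<^sup>L lebesgue (?F ?P) = integral\<^sup>L lebesgue (\<lambda>x. ?F ?S1 x + ?F ?S2 x + ?F ?S3 x + ?F ?S4 x)"
    using int[OF S(5,10)] int[OF S(1,6)] int[OF S(2,7)] int[OF S(3,8)] int[OF S(4,9)]
    by (intro integral_cong_AE) (auto intro: borel_measurable_integrable)
  also have "\<dots> = integral\<^sup>L lebesgue (?F ?S1) + integral\<^sup>L lebesgue (?F ?S2)
      + integral\<^sup>L lebesgue (?F ?S3) + integral\<^sup>L lebesgue (?F ?S4)"
    using int[OF S(1,6)] int[OF S(2,7)] int[OF S(3,8)] int[OF S(4,9)] by simp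
  also have "\<dots> = (1 / s) *\<^sub>R integral\<^sup>L lebesgue (branch_sum A f)"
    using branches s_pos unfolding branch_sum_def by (simp add: scaleR_add_right)
  finally show "integral\<^sup>L (lebesgue_on {x \<in> {0..1}. \<bar>paired_tent k x\<bar> \<in> A}) f
      = (1 / s) *\<^sub>R integral\<^sup>L lebesgue (branch_sum A f)"
    using S(5) by (simp add: integral_restrict_space)
qed

lemma integral_tent_preimage:
  fixes f :: "real \<Rightarrow> complex"
  assumes f: "integrable (lebesgue_on {0..1}) f" and A: "A \<in> sets borel" "A \<subseteq> {0..1}"
  shows "integrable lebesgue (\<lambda>y. indicator A y *\<^sub>R transfer f y)"
    and "integral\<^sup>L (lebesgue_on {x \<in> {0..1}. \<bar>paired_tent k x\<bar> \<in> A}) f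
           = integral\<^sup>L lebesgue (\<lambda>y. indicator A y *\<^sub>R transfer f y)"
proof -
  have int: "integrable lebesgue (\<lambda>y. (1 / s) *\<^sub>R branch_sum A f y)"
    using integral_tent_preimage_eq_branch_sum(1)[OF assms] by simp
  note ae = branch_sum_ae_eq_transfer[OF A(2), of f]
  have meas: "(\<lambda>y. indicator A y *\<^sub>R transfer f y) \<in> borel_measurable lebesgue"
    by (rule borel_measurable_AE[OF borel_measurable_integrable[OF int] ae])
  then show "integrable lebesgue (\<lambda>y. indicator A y *\<^sub>R transfer f y)"
    by (rule integrable_cong_AE_imp[OF int _ ae])
  have "integral\<^sup>L lebesgue (\<lambda>y. (1 / s) *\<^sub>R branch_sum A f y)
      = integral\<^sup>L lebesgue (\<lambda>y. indicator A y *\<^sub>R transfer f y)"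
    using int ae meas by (intro integral_cong_AE) (auto intro: borel_measurable_integrable)
  then show "integral\<^sup>L (lebesgue_on {x \<in> {0..1}. \<bar>paired_tent k x\<bar> \<in> A}) f
           = integral\<^sup>L lebesgue (\<lambda>y. indicator A y *\<^sub>R transfer f y)"
    using integral_tent_preimage_eq_branch_sum(2)[OF assms] by simp
qed

lemma PF_image_ae_eq_transfer:
  assumes f: "integrable (lebesgue_on {0..1}) f"
    and PF: "PF_image (\<lambda>x. \<bar>paired_tent k x\<bar>) f g"
  shows "AE y in lebesgue_on {0..1}. g y = transfer f y"
proof (rule AE_eq_if_borel_set_integrals_eq)
  show "integrable (lebesgue_on {0..1}) g"
    using PF by (simp add: PF_image_def)
  show "integrable (lebesgue_on {0..1}) (transfer f)"
    using integral_tent_preimage(1)[OF f, of "{0..1}"] by (simp add: integrable_restrict_space)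
next
  fix A :: "real set" assume A: "A \<in> sets borel" "A \<subseteq> {0..1}"
  then have "integral\<^sup>L (lebesgue_on A) g
      = integral\<^sup>L (lebesgue_on {x \<in> {0..1}. \<bar>paired_tent k x\<bar> \<in> A}) f"
    using PF by (simp add: PF_image_def)
  also have "\<dots> = integral\<^sup>L (lebesgue_on A) (transfer f)"
    using integral_tent_preimage(2)[OF f A] A by (simp add: integral_restrict_space)
  finally show "integral\<^sup>L (lebesgue_on A) g = integral\<^sup>L (lebesgue_on A) (transfer f)" .
qed

text \<open>The middle branch reverses orientation, hence the \<open>rev\<close>: the images of a sorted family
  of intervals are again listed from left to right.\<close>

definition refine :: "(real \<times> real) list \<Rightarrow> (real \<times> real) list" where
  "refine L = map (\<lambda>(a, b). (a / s, b / s)) L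
     @ rev (map (\<lambda>(a, b). ((1 - b) / s, (1 - a) / s)) L)
     @ map (\<lambda>(a, b). ((1 + a) / s, (1 + b) / s)) (filter (\<lambda>(a, b). b < k) L)"

lemma sorted_endpoints_refine:
  assumes sorted: "sorted (endpoints L)" and range: "set (endpoints L) \<subseteq> {0<..<1/2}"
  shows "sorted (endpoints (refine L))"
proof -
  define A where "A = map (\<lambda>x. x / s) (endpoints L)"
  define B where "B = rev (map (\<lambda>x. (1 - x) / s) (endpoints L))"
  define C where "C = map (\<lambda>x. (1 + x) / s) (endpoints (filter (\<lambda>(a, b). b < k) L))"
  have "endpoints (refine L) = A @ B @ C"
    unfolding refine_def A_def B_def C_def
    using endpoints_map[of "\<lambda>x. x / s" L] endpoints_rev_map[of "\<lambda>x. (1 - x) / s" L]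
      endpoints_map[of "\<lambda>x. (1 + x) / s" "filter (\<lambda>(a, b). b < k) L"]
    by simp
  moreover have "sorted A"
    unfolding A_def sorted_map
    by (rule sorted_wrt_mono_rel[OF _ sorted]) (use s_gt_2 in \<open>auto simp: divide_right_mono\<close>)
  moreover have "sorted B"
    unfolding B_def sorted_wrt_rev sorted_wrt_map
    by (rule sorted_wrt_mono_rel[OF _ sorted]) (use s_gt_2 in \<open>auto simp: divide_right_mono\<close>)
  moreover have "sorted C"
    unfolding C_def sorted_map
    by (rule sorted_wrt_mono_rel[OF _ sorted_endpoints_filter[OF sorted]])
      (use s_gt_2 in \<open>auto simp: divide_right_mono\<close>)
  moreover have "u / s \<le> (1 - v) / s \<and> (1 - u) / s \<le> (1 + v) / s \<and> u / s \<le> (1 + v) / s"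
    if "u \<in> set (endpoints L)" "v \<in> set (endpoints L)" for u v
  proof -
    have "0 < u" "u < 1/2" "0 < v" "v < 1/2"
      using range that by auto
    then show ?thesis
      using s_gt_2 by (intro conjI divide_right_mono) auto
  qed
  then have "\<forall>x \<in> set A. \<forall>y \<in> set B. x \<le> y" "\<forall>x \<in> set B. \<forall>y \<in> set C. x \<le> y"
    "\<forall>x \<in> set A. \<forall>y \<in> set C. x \<le> y"
    unfolding A_def B_def C_def using set_endpoints_filter by fastforce+
  ultimately show ?thesis
    by (auto simp: sorted_append)
qed

end

locale tent_parameters = tent_slope +
  fixes n :: nat
  assumes n_ge_6: "n \<ge> 6" and s_pow_k: "s ^ n * k = 1"
begin

lemma k_mult_power: "j \<le> n \<Longrightarrow> k * s ^ j = 1 / s ^ (n - j)"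
  using s_pow_k s_gt_2 by (simp add: field_simps flip: power_add)

lemma k_mult_power_mono: "i \<le> j \<Longrightarrow> k * s ^ i \<le> k * s ^ j"
  using s_gt_2 k_pos by (simp add: power_increasing)

lemma k_less_inverse_square: "k < 1 / s\<^sup>2"
proof -
  have "k * s ^ 0 < k * s ^ (n - 2)"
    using s_gt_2 k_pos n_ge_6 by (intro mult_strict_left_mono power_strict_increasing) auto
  also have "\<dots> = 1 / s\<^sup>2"
    using n_ge_6 by (simp add: k_mult_power)
  finally show ?thesis by simp
qed

lemma inverse_powers_ordered:
  "k < 1 / s\<^sup>2" "1 / s ^ 3 < 1 / (2 * s\<^sup>2)" "1 / (2 * s\<^sup>2) < 1 / s\<^sup>2"
  "1 / s\<^sup>2 < 1 / (2 * s)" "1 / (2 * s) < 1 / s" "1 / s < 1 / 2" "0 < 1 / s ^ 3"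
  using k_less_inverse_square s_gt_2
  by (simp_all add: divide_simps power2_eq_square power3_eq_cube)

lemma divide_s_bounds:
  "1 / s\<^sup>2 < x \<Longrightarrow> 1 / s ^ 3 < x / s" "x < 1 / s\<^sup>2 \<Longrightarrow> x / s < 1 / s ^ 3"
  "1 / s < x \<Longrightarrow> 1 / s\<^sup>2 < x / s" "x < 1 / s \<Longrightarrow> x / s < 1 / s\<^sup>2"
  "1 / (2 * s) < x \<Longrightarrow> 1 / (2 * s\<^sup>2) < x / s" "x < 1 / (2 * s) \<Longrightarrow> x / s < 1 / (2 * s\<^sup>2)"
  using s_gt_2 by (simp_all add: field_simps power2_eq_square power3_eq_cube)

text \<open>Besides \<open>1/(2s)\<close> and \<open>1/s\<close>, the breakpoints are the orbit \<open>k, k s, \<dots>, k s\<^bsup>n-2\<^esup> = 1/s\<^sup>2\<close>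
  of \<open>k\<close>, beyond which the branch \<open>x \<mapsto> (1 + x)/s\<close> leaves \<open>[0, 1/2]\<close>.\<close>

definition breakpoints :: "real set" where
  "breakpoints = {1 / (2 * s), 1 / s} \<union> (\<lambda>j. k * s ^ j) ` {..n - 2}"

definition breakpoint_free :: "real \<Rightarrow> real \<Rightarrow> bool" where
  "breakpoint_free a b \<longleftrightarrow> 0 < a \<and> a \<le> b \<and> b < 1/2 \<and> (\<forall>m \<in> breakpoints. m < a \<or> b < m)"

lemma finite_breakpoints: "finite breakpoints"
  by (simp add: breakpoints_def)

lemma k_in_breakpoints: "k \<in> breakpoints"
  unfolding breakpoints_def by (auto intro: image_eqI[of _ _ 0])

lemma breakpoint_orbit_bounds:
  assumes "j \<le> n - 2"
  shows "k \<le> k * s ^ j" "k * s ^ j \<le> 1 / s\<^sup>2"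
  using k_mult_power_mono[of 0 j] k_mult_power_mono[OF assms] n_ge_6
  by (simp_all add: k_mult_power)

lemma breakpoint_cases:
  assumes "m \<in> breakpoints"
  obtains "m = 1 / (2 * s)" | "m = 1 / s" | "k \<le> m" "m \<le> 1 / s\<^sup>2"
  using assms breakpoint_orbit_bounds unfolding breakpoints_def by auto

lemma breakpoint_free_le_k_iff: "breakpoint_free a b \<Longrightarrow> a \<le> k \<longleftrightarrow> b < k"
  using k_in_breakpoints unfolding breakpoint_free_def by force

lemma breakpoint_free_divide:
  assumes "breakpoint_free a b"
  shows "breakpoint_free (a / s) (b / s)"
proof -
  have ab: "0 < a" "a \<le> b" "b < 1/2" "\<forall>m \<in> breakpoints. m < a \<or> b < m"
    using assms by (auto simp: breakpoint_free_def)
  have "m < a / s \<or> b / s < m" if m: "m \<in> breakpoints" for m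
  proof (rule ccontr)
    assume "\<not> (m < a / s \<or> b / s < m)"
    then have between: "a \<le> s * m" "s * m \<le> b"
      using s_gt_2 by (auto simp: field_simps)
    then have "m < 1 / (2 * s)" "m \<noteq> 1 / s"
      using ab s_gt_2 by (auto simp: field_simps)
    then obtain j where j: "j \<le> n - 2" "m = k * s ^ j"
      using m unfolding breakpoints_def by auto
    \<comment> \<open>multiplication by \<open>s\<close> maps the orbit into itself, the last point to \<open>1/s\<close>\<close>
    have "s * m \<in> breakpoints"
    proof (cases "j = n - 2")
      case True
      then have "s * m = 1 / s"
        using j n_ge_6 s_gt_2 by (simp add: k_mult_power power2_eq_square)
      then show ?thesis unfolding breakpoints_def by simp
    next
      case False
      then have "s * m = k * s ^ Suc j" "Suc j \<le> n - 2"
        using j by (auto simp: algebra_simps)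
      then show ?thesis unfolding breakpoints_def by blast
    qed
    with ab(4) between show False by force
  qed
  then show ?thesis
    using ab s_gt_2 by (auto simp: breakpoint_free_def divide_simps)
qed

lemma breakpoint_free_reflect:
  assumes "breakpoint_free a b"
  shows "breakpoint_free ((1 - b) / s) ((1 - a) / s)"
proof -
  have ab: "0 < a" "a \<le> b" "b < 1/2"
    using assms by (auto simp: breakpoint_free_def)
  have bounds: "1 / (2 * s) < (1 - b) / s" "(1 - b) / s \<le> (1 - a) / s" "(1 - a) / s < 1 / s"
    using ab s_gt_2 by (simp_all add: divide_simps)
  have "m < (1 - b) / s \<or> (1 - a) / s < m" if "m \<in> breakpoints" for m
    using that by (cases rule: breakpoint_cases) (use bounds inverse_powers_ordered in linarith)+
  with bounds inverse_powers_ordered show ?thesis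
    unfolding breakpoint_free_def by (smt (verit))
qed

lemma breakpoint_free_shift:
  assumes "breakpoint_free a b" "b < k"
  shows "breakpoint_free ((1 + a) / s) ((1 + b) / s)"
proof -
  have ab: "0 < a" "a \<le> b"
    using assms by (auto simp: breakpoint_free_def)
  have bounds: "1 / s < (1 + a) / s" "(1 + a) / s \<le> (1 + b) / s" "(1 + b) / s < 1/2"
    using ab assms(2) s_gt_2 s_def by (simp_all add: divide_simps)
  have "m < (1 + a) / s" if "m \<in> breakpoints" for m
    using that by (cases rule: breakpoint_cases) (use bounds inverse_powers_ordered in linarith)+
  with bounds inverse_powers_ordered show ?thesis
    unfolding breakpoint_free_def by (smt (verit))
qed

lemma breakpoint_free_below_k:
  assumes "0 < a" "a \<le> b" "b < k"
  shows "breakpoint_free a b"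
proof -
  have "b < m" if "m \<in> breakpoints" for m
    using that by (cases rule: breakpoint_cases) (use assms inverse_powers_ordered in linarith)+
  with assms k_less_half show ?thesis
    unfolding breakpoint_free_def by auto
qed

lemma breakpoint_free_below_inverse_square:
  assumes ab: "1 / s ^ 3 < a" "a \<le> b" "b < 1 / s\<^sup>2"
  shows "breakpoint_free a b"
proof -
  have "m < a \<or> b < m" if m: "m \<in> breakpoints" for m
  proof (cases "m \<in> {1 / (2 * s), 1 / s}")
    case True
    then have "m = 1 / (2 * s) \<or> m = 1 / s" by simp
    then show ?thesis using ab inverse_powers_ordered by (elim disjE) linarith+
  next
    case False
    then obtain j where j: "j \<le> n - 2" "m = k * s ^ j"
      using m unfolding breakpoints_def by auto
    \<comment> \<open>the orbit jumps from \<open>k s\<^bsup>n-3\<^esup> = 1/s\<^sup>3\<close> to \<open>1/s\<^sup>2\<close>\<close>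
    show ?thesis
    proof (cases "j = n - 2")
      case True
      then show ?thesis using j ab n_ge_6 by (simp add: k_mult_power)
    next
      case False
      then have "k * s ^ j \<le> k * s ^ (n - 3)"
        using j by (intro k_mult_power_mono) auto
      then show ?thesis using j ab n_ge_6 by (simp add: k_mult_power)
    qed
  qed
  with ab inverse_powers_ordered show ?thesis
    unfolding breakpoint_free_def by (smt (verit))
qed

lemma breakpoint_free_between_inverse_s:
  assumes "1 / (2 * s) < a" "a \<le> b" "b < 1 / s"
  shows "breakpoint_free a b"
proof -
  have "m < a \<or> b < m" if "m \<in> breakpoints" for m
    using that by (cases rule: breakpoint_cases) (use assms inverse_powers_ordered in linarith)+
  with assms inverse_powers_ordered show ?thesis
    unfolding breakpoint_free_def by (smt (verit))
qed

end

text \<open>The eigenvalue equation \<open>P f = c f\<close>, symmetrized by \<open>h x = f x + f (1 - x)\<close> and scaled by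
  \<open>z = s c\<close>, on a set \<open>G \<subseteq> [0, 1/2]\<close> of full measure that is invariant under the inverse
  branches.\<close>

locale symmetric_eigenfunction = tent_parameters +
  fixes h :: "real \<Rightarrow> complex" and z :: complex and G :: "real set"
  assumes norm_z_gt_1: "norm z > 1"
    and G_divide: "x \<in> G \<Longrightarrow> x / s \<in> G"
    and G_reflect: "x \<in> G \<Longrightarrow> 0 < x \<Longrightarrow> x < 1/2 \<Longrightarrow> (1 - x) / s \<in> G"
    and G_shift: "x \<in> G \<Longrightarrow> 0 < x \<Longrightarrow> x < k \<Longrightarrow> (1 + x) / s \<in> G"
    and G_dense: "0 \<le> a \<Longrightarrow> a < b \<Longrightarrow> b \<le> 1/2 \<Longrightarrow> \<exists>x \<in> G. a < x \<and> x < b"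
    and eigen_equation: "x \<in> G \<Longrightarrow> 0 < x \<Longrightarrow> x < 1/2 \<Longrightarrow>
      z * h x = h (x / s) + h ((1 - x) / s) + (if x \<le> k then h ((1 + x) / s) else 0)"
    and bounded_increments: "\<exists>V. \<forall>L. sorted (endpoints L) \<longrightarrow> set (endpoints L) \<subseteq> {0<..<1/2} \<longrightarrow>
      increment_sum h L \<le> V"
begin

definition admissible :: "(real \<times> real) list \<Rightarrow> bool" where
  "admissible L \<longleftrightarrow> sorted (endpoints L) \<and> (\<forall>(a, b) \<in> set L. a \<in> G \<and> b \<in> G \<and> breakpoint_free a b)"

lemma admissible_endpoints:
  assumes "admissible L"
  shows "set (endpoints L) \<subseteq> {0<..<1/2}"
proof
  fix x assume "x \<in> set (endpoints L)"
  then obtain a b where "(a, b) \<in> set L" "x = a \<or> x = b"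
    unfolding set_endpoints by auto
  with assms show "x \<in> {0<..<1/2}"
    unfolding admissible_def breakpoint_free_def by auto
qed

lemma admissible_refine:
  assumes "admissible L"
  shows "admissible (refine L)"
proof -
  have "a \<in> G \<and> b \<in> G \<and> breakpoint_free a b" if "(a, b) \<in> set (refine L)" for a b
  proof -
    from that consider
      (divide) a' b' where "(a', b') \<in> set L" "a = a' / s" "b = b' / s"
    | (reflect) a' b' where "(a', b') \<in> set L" "a = (1 - b') / s" "b = (1 - a') / s"
    | (shift) a' b' where "(a', b') \<in> set L" "b' < k" "a = (1 + a') / s" "b = (1 + b') / s"
      unfolding refine_def by auto
    then show ?thesis
    proof cases
      case divide
      then show ?thesis
        using assms G_divide breakpoint_free_divide by (auto simp: admissible_def)
    next
      case reflect
      then have "breakpoint_free a' b'" "a' \<in> G" "b' \<in> G"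
        using assms by (auto simp: admissible_def)
      with reflect show ?thesis
        using G_reflect breakpoint_free_reflect by (auto simp: breakpoint_free_def)
    next
      case shift
      then have "breakpoint_free a' b'" "a' \<in> G" "b' \<in> G"
        using assms by (auto simp: admissible_def)
      with shift show ?thesis
        using G_shift breakpoint_free_shift by (auto simp: breakpoint_free_def)
    qed
  qed
  then show ?thesis
    using assms sorted_endpoints_refine admissible_endpoints by (auto simp: admissible_def)
qed

lemma increment_expansion:
  assumes "a \<in> G" "b \<in> G" "breakpoint_free a b"
  shows "norm z * norm (h b - h a) \<le> norm (h (b / s) - h (a / s)) + norm (h ((1 - a) / s) - h ((1 - b) / s))
    + (if b < k then norm (h ((1 + b) / s) - h ((1 + a) / s)) else 0)"
proof -
  have ab: "0 < a" "a \<le> b" "b < 1/2"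
    using assms(3) by (auto simp: breakpoint_free_def)
  have k_iff: "a \<le> k \<longleftrightarrow> b < k" "b \<le> k \<longleftrightarrow> b < k"
    using breakpoint_free_le_k_iff[OF assms(3)] ab by auto
  have "z * (h b - h a) = (h (b / s) - h (a / s)) + (h ((1 - b) / s) - h ((1 - a) / s))
      + (if b < k then h ((1 + b) / s) - h ((1 + a) / s) else 0)"
    using eigen_equation[OF assms(1)] eigen_equation[OF assms(2)] ab k_iff
    by (auto simp: algebra_simps)
  then have "norm z * norm (h b - h a) = norm ((h (b / s) - h (a / s)) + (h ((1 - b) / s) - h ((1 - a) / s))
      + (if b < k then h ((1 + b) / s) - h ((1 + a) / s) else 0))"
    by (metis norm_mult)
  also have "\<dots> \<le> norm (h (b / s) - h (a / s)) + norm (h ((1 - b) / s) - h ((1 - a) / s))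
      + norm (if b < k then h ((1 + b) / s) - h ((1 + a) / s) else 0)"
    by (meson norm_triangle_ineq norm_triangle_le add_mono order_refl)
  also have "\<dots> = norm (h (b / s) - h (a / s)) + norm (h ((1 - a) / s) - h ((1 - b) / s))
      + (if b < k then norm (h ((1 + b) / s) - h ((1 + a) / s)) else 0)"
    by (simp add: norm_minus_commute)
  finally show ?thesis .
qed

lemma increment_sum_refine:
  assumes "admissible L"
  shows "norm z * increment_sum h L \<le> increment_sum h (refine L)"
proof -
  have "norm z * increment_sum h L = sum_list (map (\<lambda>(a, b). norm z * norm (h b - h a)) L)"
    unfolding increment_sum_def by (simp add: sum_list_const_mult[symmetric] case_prod_unfold)
  also have "\<dots> \<le> sum_list (map (\<lambda>(a, b). norm (h (b / s) - h (a / s))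
      + norm (h ((1 - a) / s) - h ((1 - b) / s))
      + (if b < k then norm (h ((1 + b) / s) - h ((1 + a) / s)) else 0)) L)"
    using assms increment_expansion by (intro sum_list_mono) (auto simp: admissible_def)
  also have "\<dots> = increment_sum h (refine L)"
    unfolding refine_def increment_sum_simps increment_sum_map
    by (simp add: sum_list_map_filter' sum_list_addf[symmetric] case_prod_unfold add.assoc)
  finally show ?thesis .
qed

text \<open>Refinement multiplies increment sums by at least \<open>|z| > 1\<close>, while bounded variation
  keeps them bounded.\<close>

lemma constant_on_breakpoint_free:
  assumes "a \<in> G" "b \<in> G" "breakpoint_free a b"
  shows "h a = h b"
proof -
  obtain V where V: "\<And>L. sorted (endpoints L) \<Longrightarrow> set (endpoints L) \<subseteq> {0<..<1/2} \<Longrightarrow>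
      increment_sum h L \<le> V"
    using bounded_increments by blast
  then have V: "increment_sum h L \<le> V" if "admissible L" for L
    using that admissible_endpoints by (auto simp: admissible_def)
  have "admissible [(a, b)]"
    using assms by (auto simp: admissible_def breakpoint_free_def)
  moreover have "bdd_above (increment_sum h ` Collect admissible)"
    using V by (intro bdd_aboveI2[where M = V]) auto
  ultimately have "increment_sum h [(a, b)] = 0"
    using norm_z_gt_1 admissible_refine increment_sum_refine V
    by (intro expanding_bounded_nonneg_eq_0[where X = "Collect admissible" and step = refine])
      (auto intro: increment_sum_nonneg)
  then show ?thesis
    by simp
qed

lemma constant_between:
  assumes free: "\<And>a b. lo < a \<Longrightarrow> a \<le> b \<Longrightarrow> b < hi \<Longrightarrow> breakpoint_free a b"
    and "x \<in> G" "y \<in> G" "lo < x" "x < hi" "lo < y" "y < hi"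
  shows "h x = h y"
  using assms constant_on_breakpoint_free[of x y] constant_on_breakpoint_free[of y x]
  by (cases "x \<le> y") auto

lemma z_nonzero: "z \<noteq> 0" and z_ne_1: "z \<noteq> 1"
  using norm_z_gt_1 by auto

definition plateau :: complex where
  "plateau = h (SOME p. p \<in> G \<and> 1 / (2 * s) < p \<and> p < 1 / s)"

lemma h_eq_plateau:
  assumes "x \<in> G" "1 / (2 * s) < x" "x < 1 / s"
  shows "h x = plateau"
proof -
  have "\<exists>p. p \<in> G \<and> 1 / (2 * s) < p \<and> p < 1 / s"
    using G_dense[of "1 / (2 * s)" "1 / s"] inverse_powers_ordered s_pos by auto
  then have "(SOME p. p \<in> G \<and> 1 / (2 * s) < p \<and> p < 1 / s) \<in> G \<inter> {1 / (2 * s)<..<1 / s}"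
    by (rule someI2_ex) auto
  then show ?thesis
    unfolding plateau_def using assms
    by (intro constant_between[OF breakpoint_free_between_inverse_s]) auto
qed

lemma h_reflect_eq_plateau:
  assumes "x \<in> G" "0 < x" "x < 1/2"
  shows "h ((1 - x) / s) = plateau"
  using assms G_reflect s_pos by (intro h_eq_plateau) (auto simp: divide_simps)

lemma h_divide_eq:
  assumes "y \<in> G" "1 / (2 * s) < y" "y < 1 / s"
  shows "h (y / s) = (z - 1) * plateau"
proof -
  have y: "0 < y" "y < 1/2" "\<not> y \<le> k"
    using assms inverse_powers_ordered by (smt (verit))+
  then have "z * h y = h (y / s) + h ((1 - y) / s)"
    using eigen_equation[OF assms(1)] by simp
  then show ?thesis
    using h_eq_plateau[OF assms] h_reflect_eq_plateau[OF assms(1) y(1,2)] by (simp add: algebra_simps)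
qed

lemma h_eq_plateau_below:
  assumes "x \<in> G" "1 / s\<^sup>2 < x" "x < 1 / (2 * s)"
  shows "h x = plateau"
proof -
  have x: "0 < x" "x < 1/2" "\<not> x \<le> k"
    using assms inverse_powers_ordered by (smt (verit))+
  obtain p where p: "p \<in> G" "1 / (2 * s) < p" "p < 1 / s"
    using G_dense[of "1 / (2 * s)" "1 / s"] inverse_powers_ordered s_pos by auto
  have "1 / s ^ 3 < x / s" "x / s < 1 / s\<^sup>2" "1 / s ^ 3 < p / s" "p / s < 1 / s\<^sup>2"
    using assms p inverse_powers_ordered
    by (intro divide_s_bounds; linarith)+
  then have "h (x / s) = h (p / s)"
    using G_divide assms(1) p(1)
    by (intro constant_between[OF breakpoint_free_below_inverse_square]) auto
  also have "\<dots> = (z - 1) * plateau"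
    by (rule h_divide_eq[OF p])
  finally have "z * h x = z * plateau"
    using eigen_equation[OF assms(1) x(1,2)] x(3) h_reflect_eq_plateau[OF assms(1) x(1,2)]
    by (simp add: algebra_simps)
  then show ?thesis
    using z_nonzero by simp
qed

lemma h_above_inverse_s:
  assumes "x \<in> G" "1 / s < x" "x < 1/2"
  shows "z * h x = 2 * plateau"
proof -
  have x: "0 < x" "\<not> x \<le> k"
    using assms inverse_powers_ordered by (smt (verit))+
  have "1 / s\<^sup>2 < x / s" "x / s < 1 / (2 * s)"
    using divide_s_bounds(3)[OF assms(2)] assms(3) s_pos by (auto simp: field_simps)
  then have "h (x / s) = plateau"
    using G_divide[OF assms(1)] by (intro h_eq_plateau_below)
  then show ?thesis
    using eigen_equation[OF assms(1) x(1) assms(3)] x(2) h_reflect_eq_plateau[OF assms(1) x(1) assms(3)]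
    by simp
qed

definition gap_start :: "nat \<Rightarrow> real" where
  "gap_start j = (if j = 0 then 0 else k * s ^ (j - 1))"

lemma h_below_k:
  assumes "x \<in> G" "0 < x" "x < k"
  shows "z * h x = h x + plateau + 2 * plateau / z"
proof -
  have x: "x < 1/2" "x / s < x"
    using assms k_less_half s_gt_2 by (simp_all add: divide_simps)
  then have "h (x / s) = h x"
    using assms s_pos G_divide[OF assms(1)]
    by (intro constant_between[of 0 k, OF breakpoint_free_below_k]) auto
  moreover have "1 / s < (1 + x) / s" "(1 + x) / s < 1/2"
    using assms s_pos s_def by (auto simp: divide_simps)
  then have "h ((1 + x) / s) = 2 * plateau / z"
    using h_above_inverse_s[OF G_shift[OF assms]] z_nonzero by (simp add: field_simps)
  ultimately show ?thesis
    using eigen_equation[OF assms(1,2) x(1)] h_reflect_eq_plateau[OF assms(1,2) x(1)] assms(3) by simp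
qed

lemma h_divide_above_k:
  assumes "x \<in> G" "k < x" "x < 1/2"
  shows "h (x / s) = z * h x - plateau"
  using eigen_equation[of x] h_reflect_eq_plateau[of x] assms k_pos by simp

lemma h_on_gap:
  assumes "j \<le> n - 2" "x \<in> G" "gap_start j < x" "x < k * s ^ j"
  shows "z ^ j * ((z - 1) * h x - plateau) = 2 * plateau / z"
  using assms
proof (induction j arbitrary: x)
  case 0
  then show ?case
    using h_below_k[of x] by (simp add: gap_start_def algebra_simps)
next
  case (Suc j)
  have x: "k * s ^ j < x" "x < k * s ^ Suc j"
    using Suc.prems by (auto simp: gap_start_def)
  have "k < x"
    using k_mult_power_mono[of 0 j] x by simp
  moreover have "x < 1/2"
    using x breakpoint_orbit_bounds[of "Suc j"] Suc.prems(1) inverse_powers_ordered by linarith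
  moreover have "gap_start j < x / s"
  proof (cases j)
    case (Suc i)
    then show ?thesis
      using x s_pos by (simp add: gap_start_def divide_simps mult.commute mult.left_commute)
  qed (use \<open>k < x\<close> k_pos s_pos in \<open>simp add: gap_start_def\<close>)
  moreover have "x / s < k * s ^ j"
    using x s_pos by (simp add: divide_simps mult.commute mult.left_commute)
  ultimately have "z ^ j * ((z - 1) * (z * h x - plateau) - plateau) = 2 * plateau / z"
    using Suc.IH[OF _ G_divide[OF Suc.prems(2)]] Suc.prems(1,2) h_divide_above_k by simp
  then show ?case
    by (simp add: algebra_simps)
qed

text \<open>Following the value \<open>(z - 1) plateau\<close> of \<open>h\<close> on \<open>(1/(2s\<^sup>2), 1/s\<^sup>2)\<close> down the gaps of the
  orbit of \<open>k\<close> to \<open>(0, k)\<close> yields the characteristic equation unless the plateau value is \<open>0\<close>.\<close>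

lemma plateau_characteristic: "plateau * (z ^ n * (z - 2) - 2) = 0"
proof -
  obtain p where p: "p \<in> G" "1 / (2 * s) < p" "p < 1 / s"
    using G_dense[of "1 / (2 * s)" "1 / s"] inverse_powers_ordered s_pos by auto
  have "gap_start (n - 2) = 1 / s ^ 3" "k * s ^ (n - 2) = 1 / s\<^sup>2"
    using n_ge_6 by (auto simp: gap_start_def k_mult_power numeral_3_eq_3 Suc_diff_Suc)
  moreover have "1 / s ^ 3 < p / s" "p / s < 1 / s\<^sup>2"
    using p inverse_powers_ordered
    by (intro divide_s_bounds; linarith)+
  ultimately have "z ^ (n - 2) * ((z - 1) * h (p / s) - plateau) = 2 * plateau / z"
    using G_divide[OF p(1)] by (intro h_on_gap) auto
  then have "z ^ (n - 2) * (z * ((z - 2) * plateau)) = 2 * plateau / z"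
    unfolding h_divide_eq[OF p] by (simp add: algebra_simps)
  then have "(z ^ (n - 2) * z\<^sup>2) * ((z - 2) * plateau) = 2 * plateau"
    using z_nonzero by (simp add: eq_divide_eq power2_eq_square mult_ac)
  moreover have "n = (n - 2) + 2"
    using n_ge_6 by simp
  then have "z ^ (n - 2) * z\<^sup>2 = z ^ n"
    by (metis power_add)
  ultimately show ?thesis
    by (simp add: algebra_simps)
qed

lemma h_vanishes_off_breakpoints:
  assumes "plateau = 0" "x \<in> G" "0 < x" "x < 1/2" "x \<notin> breakpoints"
  shows "h x = 0"
proof -
  have x: "x \<noteq> 1 / s" "x \<noteq> 1 / (2 * s)" "\<And>j. j \<le> n - 2 \<Longrightarrow> x \<noteq> k * s ^ j"
    using assms(5) unfolding breakpoints_def by auto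
  have "x \<noteq> 1 / s\<^sup>2"
    using x(3)[of "n - 2"] n_ge_6 by (simp add: k_mult_power)
  then consider "x < 1 / s\<^sup>2" | "1 / s\<^sup>2 < x" "x < 1 / (2 * s)" | "1 / (2 * s) < x" "x < 1 / s"
    | "1 / s < x"
    using x(1,2) by linarith
  then show ?thesis
  proof cases
    case 1
    define j where "j = (LEAST j. x < k * s ^ j)"
    have top: "x < k * s ^ (n - 2)"
      using 1 n_ge_6 by (simp add: k_mult_power)
    have j: "x < k * s ^ j" "j \<le> n - 2"
      unfolding j_def by (rule LeastI[of _ "n - 2"], rule top, rule Least_le, rule top)
    have "gap_start j < x"
    proof (cases j)
      case (Suc i)
      then have "\<not> x < k * s ^ i" "x \<noteq> k * s ^ i"
        using not_less_Least[of i "\<lambda>j. x < k * s ^ j"] x(3)[of i] j(2) by (auto simp: j_def)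
      then show ?thesis
        using Suc by (simp add: gap_start_def)
    qed (use assms(3) in \<open>simp add: gap_start_def\<close>)
    then have "z ^ j * ((z - 1) * h x) = 0"
      using h_on_gap[OF j(2) assms(2) _ j(1)] assms(1) by simp
    then show ?thesis
      using z_nonzero z_ne_1 by simp
  next
    case 2
    then show ?thesis using h_eq_plateau_below assms by simp
  next
    case 3
    then show ?thesis using h_eq_plateau assms by simp
  next
    case 4
    then show ?thesis using h_above_inverse_s[OF assms(2) 4 assms(4)] assms(1) z_nonzero by simp
  qed
qed

lemma characteristic_root_or_vanishes:
  "z ^ n * (z - 2) = 2 \<or> (\<forall>x \<in> G. 0 < x \<and> x < 1/2 \<and> x \<notin> breakpoints \<longrightarrow> h x = 0)"
  using plateau_characteristic h_vanishes_off_breakpoints by auto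

end

context tent_parameters
begin

lemma ae_zero_if_symmetrization_vanishes:
  fixes f :: "real \<Rightarrow> complex"
  assumes eq: "\<And>y. y \<in> {0..1} \<Longrightarrow> y \<notin> Z \<Longrightarrow> c * f y = transfer f y"
    and c: "c \<noteq> 0" and Z: "Z \<in> null_sets lebesgue"
    and Z_reflect: "\<And>x. x \<in> Z \<Longrightarrow> 1 - s * x \<in> Z" and Z_shift: "\<And>x. x \<in> Z \<Longrightarrow> s * x - 1 \<in> Z"
    and vanish: "\<And>x. 0 < x \<Longrightarrow> x < 1/2 \<Longrightarrow> x \<notin> Z \<Longrightarrow> f x + f (1 - x) = 0"
  shows "AE y in lebesgue_on {0..1}. f y = 0"
proof -
  have "AE y in lebesgue. y \<notin> Z \<union> {0, 1, k}"
    using Z by (intro AE_not_in) auto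
  then have "AE y in lebesgue. y \<in> {0..1} \<longrightarrow> f y = 0"
  proof eventually_elim
    case (elim y)
    show ?case
    proof
      assume y01: "y \<in> {0..1}"
      then have y: "0 < y" "y < 1" "y \<notin> Z" "y \<noteq> k"
        using elim by auto
      have "1 - s * ((1 - y) / s) = y" "s * ((1 + y) / s) - 1 = y"
        using s_pos by simp_all
      then have notin: "(1 - y) / s \<notin> Z" "(1 + y) / s \<notin> Z"
        using y(3) Z_reflect Z_shift by metis+
      have "f ((1 - y) / s) + f (1 - (1 - y) / s) = 0"
        using y s_gt_2 by (intro vanish notin) (auto simp: field_simps)
      moreover have "f ((1 + y) / s) + f (1 - (1 + y) / s) = 0" if "y \<le> k"
        using y that s_pos half_eq by (intro vanish notin) (auto simp: field_simps)
      ultimately have "of_real s * (c * f y) = 0"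
        using eq[OF y01 y(3)] scaled_transfer[of f y] by simp
      then show "f y = 0"
        using c s_pos by simp
    qed
  qed
  then show ?thesis
    by (simp add: AE_restrict_space_iff)
qed

lemma symmetric_eigenfunction_off_invariant_null_set:
  fixes f :: "real \<Rightarrow> complex"
  assumes bv: "bv01 f" and z: "norm (of_real s * c) > 1"
    and eq: "\<And>y. y \<in> {0..1} \<Longrightarrow> y \<notin> Z \<Longrightarrow> c * f y = transfer f y"
    and Z: "Z \<in> null_sets lebesgue"
    and Z_scale: "\<And>x. x \<in> Z \<Longrightarrow> s * x \<in> Z" and Z_reflect: "\<And>x. x \<in> Z \<Longrightarrow> 1 - s * x \<in> Z"
    and Z_shift: "\<And>x. x \<in> Z \<Longrightarrow> s * x - 1 \<in> Z" and Z_flip: "\<And>x. x \<in> Z \<Longrightarrow> 1 - x \<in> Z"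
  shows "symmetric_eigenfunction k s n (\<lambda>x. f x + f (1 - x)) (of_real s * c) ({0..1/2} - Z)"
proof unfold_locales
  let ?h = "\<lambda>x. f x + f (1 - x)" and ?G = "{0..1/2} - Z"
  have preimage: "s * (x / s) = x" "1 - s * ((1 - x) / s) = x" "s * ((1 + x) / s) - 1 = x" for x
    using s_pos by simp_all
  show "norm (of_real s * c) > 1"
    by (rule z)
  show "x / s \<in> ?G" if "x \<in> ?G" for x
    using that s_gt_2 Z_scale[of "x / s"] by (auto simp: preimage field_simps)
  show "(1 - x) / s \<in> ?G" if "x \<in> ?G" "0 < x" "x < 1/2" for x
    using that s_gt_2 Z_reflect[of "(1 - x) / s"] by (auto simp: preimage field_simps)
  show "(1 + x) / s \<in> ?G" if "x \<in> ?G" "0 < x" "x < k" for x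
    using that s_pos half_eq Z_shift[of "(1 + x) / s"] by (auto simp: preimage)
  show "\<exists>x \<in> ?G. a < x \<and> x < b" if "0 \<le> a" "a < b" "b \<le> 1/2" for a b
  proof (rule ccontr)
    assume "\<not> (\<exists>x \<in> ?G. a < x \<and> x < b)"
    then have "{a<..<b} \<subseteq> Z"
      using that by auto
    then have "{a<..<b} \<in> null_sets lebesgue"
      using null_sets_subset[OF Z] by simp
    then show False
      using that by (simp add: null_sets_def)
  qed
  show "of_real s * c * ?h x = ?h (x / s) + ?h ((1 - x) / s) + (if x \<le> k then ?h ((1 + x) / s) else 0)"
    if "x \<in> ?G" "0 < x" "x < 1/2" for x
  proof -
    have x: "x \<in> {0..1}" "x \<notin> Z" "1 - x \<in> {0..1}" "1 - x \<notin> Z"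
      using that Z_flip[of "1 - x"] by auto
    have "\<not> 1 - x \<le> k"
      using that k_less_half by simp
    then have "of_real s * c * ?h x = of_real s * transfer f x + of_real s * transfer f (1 - x)"
      by (simp add: algebra_simps flip: eq[OF x(1,2)] eq[OF x(3,4)])
    also have "\<dots> = ?h ((1 - x) / s) + (if x \<le> k then ?h ((1 + x) / s) else 0) + ?h (x / s)"
      unfolding scaled_transfer using \<open>\<not> 1 - x \<le> k\<close> by simp
    finally show ?thesis
      by (simp add: algebra_simps)
  qed
  show "\<exists>V. \<forall>L. sorted (endpoints L) \<longrightarrow> set (endpoints L) \<subseteq> {0<..<1/2} \<longrightarrow> increment_sum ?h L \<le> V"
    using bv01_symmetrization_increment_sum_le[OF bv] by metis
qed

lemma eigen_equation_off_invariant_null_set: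
  fixes f :: "real \<Rightarrow> complex" and c :: complex
  assumes PF: "PF_image (\<lambda>x. \<bar>paired_tent k x\<bar>) f (\<lambda>x. c * f x)" and c: "c \<noteq> 0"
  obtains Z where "Z \<in> null_sets lebesgue" "breakpoints \<subseteq> Z"
    "\<And>x. x \<in> Z \<Longrightarrow> s * x \<in> Z" "\<And>x. x \<in> Z \<Longrightarrow> 1 - s * x \<in> Z"
    "\<And>x. x \<in> Z \<Longrightarrow> s * x - 1 \<in> Z" "\<And>x. x \<in> Z \<Longrightarrow> 1 - x \<in> Z"
    "\<And>y. y \<in> {0..1} \<Longrightarrow> y \<notin> Z \<Longrightarrow> c * f y = transfer f y"
proof -
  have "integrable (lebesgue_on {0..1}) (\<lambda>x. c * f x)"
    using PF by (simp add: PF_image_def)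
  then have "integrable (lebesgue_on {0..1}) (\<lambda>x. inverse c * (c * f x))"
    by (rule integrable_mult_right)
  then have "integrable (lebesgue_on {0..1}) f"
    using c by (simp add: field_simps)
  then have "AE y in lebesgue_on {0..1}. c * f y = transfer f y"
    using PF by (rule PF_image_ae_eq_transfer)
  then obtain N where N: "N \<in> null_sets lebesgue" "\<And>y. y \<in> {0..1} \<Longrightarrow> y \<notin> N \<Longrightarrow> c * f y = transfer f y"
    by (auto simp: AE_restrict_space_iff elim!: AE_E3)
  define maps :: "(real \<Rightarrow> real) set"
    where "maps = {\<lambda>x. s * x, \<lambda>x. 1 - s * x, \<lambda>x. s * x - 1, \<lambda>x. 1 - x}"
  have "N \<union> breakpoints \<in> null_sets lebesgue"
    using N(1) finite_breakpoints finite_imp_null_set_lborel null_sets_completionI by blast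
  then obtain Z where Z: "N \<union> breakpoints \<subseteq> Z" "Z \<in> null_sets lebesgue"
    "\<And>g x. g \<in> maps \<Longrightarrow> x \<in> Z \<Longrightarrow> g x \<in> Z"
    by (rule null_sets_invariant_hull[where F = maps]) (auto simp: maps_def intro!: derivative_intros)
  then show ?thesis
    using N(2) by (intro that) (auto simp: maps_def)
qed

lemma large_eigenvalue_eq_1:
  fixes f :: "real \<Rightarrow> complex" and c :: complex
  assumes bv: "bv01 f" and nonzero: "\<not> (AE x in lebesgue_on {0..1}. f x = 0)"
    and PF: "PF_image (\<lambda>x. \<bar>paired_tent k x\<bar>) f (\<lambda>x. c * f x)"
    and large: "norm c > (1 + 1 / real n) / s"
  shows "c = 1"
proof -
  define z where "z = of_real s * c"
  have z: "norm z > 1 + 1 / real n"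
    using large s_pos by (simp add: z_def norm_mult field_simps)
  moreover have "0 \<le> 1 / real n"
    by simp
  ultimately have z_gt_1: "norm z > 1"
    by linarith
  then have c: "c \<noteq> 0"
    by (auto simp: z_def)
  then obtain Z where Z: "Z \<in> null_sets lebesgue" "breakpoints \<subseteq> Z"
    "\<And>x. x \<in> Z \<Longrightarrow> s * x \<in> Z" "\<And>x. x \<in> Z \<Longrightarrow> 1 - s * x \<in> Z"
    "\<And>x. x \<in> Z \<Longrightarrow> s * x - 1 \<in> Z" "\<And>x. x \<in> Z \<Longrightarrow> 1 - x \<in> Z"
    and eq: "\<And>y. y \<in> {0..1} \<Longrightarrow> y \<notin> Z \<Longrightarrow> c * f y = transfer f y"
    using eigen_equation_off_invariant_null_set[OF PF] by metis
  interpret symmetric_eigenfunction k s n "\<lambda>x. f x + f (1 - x)" z "{0..1/2} - Z"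
    unfolding z_def using bv z_gt_1 eq Z
    by (intro symmetric_eigenfunction_off_invariant_null_set) (auto simp: z_def)
  consider "z ^ n * (z - 2) = 2"
    | "\<forall>x \<in> {0..1/2} - Z. 0 < x \<and> x < 1/2 \<and> x \<notin> breakpoints \<longrightarrow> f x + f (1 - x) = 0"
    using characteristic_root_or_vanishes by blast
  then show ?thesis
  proof cases
    case 1
    have "s ^ n * (s - 2) = 2"
      using s_pow_k s_def by (simp add: algebra_simps)
    then have "z = of_real s"
      using characteristic_root_unique[OF n_ge_6 s_gt_2 _ 1 z] by simp
    then show ?thesis
      using s_pos by (simp add: z_def)
  next
    case 2
    then have "AE y in lebesgue_on {0..1}. f y = 0"
      using eq Z c by (intro ae_zero_if_symmetrization_vanishes[where Z = Z]) auto
    with nonzero show ?thesis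
      by blast
  qed
qed

end

lemma second_largest_eigenvalue_le:
  assumes c: "second_largest_eigenvalue E c" and b: "b < 1"
    and E: "\<And>\<mu>. \<mu> \<in> E \<Longrightarrow> \<mu> = 1 \<or> norm \<mu> \<le> b"
  shows "norm c \<le> b"
proof (rule ccontr)
  assume "\<not> norm c \<le> b"
  with c E have "c = 1" "norm c < Sup (norm ` E)"
    by (auto simp: second_largest_eigenvalue_def Let_def)
  moreover have "Sup (norm ` E) \<le> 1"
    using c E b by (intro cSup_least) (auto simp: second_largest_eigenvalue_def Let_def, fastforce)
  ultimately show False
    by simp
qed

theorem corollary17:
  shows "(\<forall>n::nat. n \<ge> 6 \<longrightarrow>
            (\<forall>c. second_largest_eigenvalue (PF_eigenvalues (Ttilde n)) c \<longrightarrow>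
               cmod c \<le> (1 + 1 / real n) / (2 + 2 * kappa n)))
       \<and> (\<lambda>n. (1 + 1 / real n) / (2 + 2 * kappa n) - (1/2) * (1 + 1 / real n))
            \<in> o(\<lambda>n. 1 / real n)"
proof (intro conjI allI impI)
  fix n :: nat and c :: complex
  assume n: "n \<ge> 6" and c: "second_largest_eigenvalue (PF_eigenvalues (Ttilde n)) c"
  interpret tent_parameters "kappa n" "2 + 2 * kappa n" n
    using kappa_root[of n] n by unfold_locales (auto simp: algebra_simps)
  have "Ttilde n = (\<lambda>x. \<bar>paired_tent (kappa n) x\<bar>)"
    by (simp add: Ttilde_def fun_eq_iff)
  then have "\<mu> = 1 \<or> norm \<mu> \<le> (1 + 1 / real n) / (2 + 2 * kappa n)"
    if "\<mu> \<in> PF_eigenvalues (Ttilde n)" for \<mu>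
    using that large_eigenvalue_eq_1 by (auto simp: PF_eigenvalues_def not_le)
  moreover have "1 + 1 / real n \<le> 2"
    using n by (simp add: field_simps)
  then have "(1 + 1 / real n) / (2 + 2 * kappa n) < 1"
    using s_gt_2 by (simp add: divide_simps)
  ultimately show "norm c \<le> (1 + 1 / real n) / (2 + 2 * kappa n)"
    using c by (intro second_largest_eigenvalue_le) auto
qed (rule eigenvalue_bound_asymptotics)

end
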